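(* Let $A \in \mathbb{R}^{m \times r}$, $B=(b_{ji}) \in \mathbb{R}^{r \times n}$ with rows $b_1,\dots,b_r$, $S\subseteq\mathbb{R}^n$, and for $\kappa\in\mathbb{R}^r_+$ let $f_\kappa(x) = A_\kappa x^B$ on $\mathbb{R}^n_+$. Assume $f_\kappa$ is injective with respect to $S$ for all $\kappa \in \mathbb{R}^r_+$. Let $\Omega_B = \{ x \in \overline{\mathbb{R}}^n_+ \mid x_i \neq 0 \text{ whenever } b_{ji} < 0 \text{ for some } j \in [r] \}$ and let $\bar f_\kappa\colon\Omega_B\to\mathbb{R}^m$, $\bar f_\kappa(x)=A_\kappa x^B$, be the extension of $f_\kappa$. Let $x,y \in \Omega_B$ with $x \neq y$ and $x-y\in S$, such that for every $j \in [r]$, $x^{b_j}=y^{b_j}=0$ implies $x_i = y_i = 0$ for all $i \in [n]$ with $b_{ji} \neq 0$. Then $\bar f_\kappa(x) \neq \bar f_\kappa(y)$ for all $\kappa \in \mathbb{R}^r_+$.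
   Context: $\mathbb{R}_+$ denotes the strictly positive reals and $\overline{\mathbb{R}}_+$ the nonnegative reals. $x^{b_j}=\prod_i x_i^{b_{ji}}$ with the convention $0^0=1$ (well defined on $\Omega_B$), $x^B=(x^{b_1},\dots,x^{b_r})$, $A_\kappa=A\,\mathrm{diag}(\kappa)$, $[r]=\{1,\dots,r\}$. A function $g$ on $\mathbb{R}^n_+$ is injective with respect to $S$ if $x,y\in\mathbb{R}^n_+$, $x\ne y$, $x-y\in S$ imply $g(x)\neq g(y)$. *)

theory Defs
  imports "HOL-Analysis.Analysis"
begin

text \<open>Real power with the convention 0^0 = 1 (for nonnegative base).\<close>
definition rpow :: "real \<Rightarrow> real \<Rightarrow> real" where
  "rpow x a = (if a = 0 then 1 else x powr a)"

definition monom_pow :: "real ^ 'n \<Rightarrow> real ^ 'n \<Rightarrow> real" where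
  "monom_pow x b = (\<Prod>i\<in>UNIV. rpow (x $ i) (b $ i))"

definition vec_pow :: "real ^ 'n \<Rightarrow> real ^ 'n ^ 'r \<Rightarrow> real ^ 'r" where
  "vec_pow x B = (\<chi> j. monom_pow x (B $ j))"

text \<open>A_kappa x^B = A diag(kappa) x^B.\<close>
definition gmak :: "real ^ 'r ^ 'm \<Rightarrow> real ^ 'n ^ 'r \<Rightarrow> real ^ 'r \<Rightarrow> real ^ 'n \<Rightarrow> real ^ 'm" where
  "gmak A B \<kappa> x = A *v (\<chi> j. \<kappa> $ j * vec_pow x B $ j)"

definition pos_vec :: "real ^ 'k \<Rightarrow> bool" where
  "pos_vec x \<longleftrightarrow> (\<forall>i. x $ i > 0)"

definition nonneg_vec :: "real ^ 'k \<Rightarrow> bool" where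
  "nonneg_vec x \<longleftrightarrow> (\<forall>i. x $ i \<ge> 0)"

definition injective_wrt :: "(real ^ 'n \<Rightarrow> 'b) \<Rightarrow> (real ^ 'n) set \<Rightarrow> bool" where
  "injective_wrt g S \<longleftrightarrow>
     (\<forall>x y. pos_vec x \<longrightarrow> pos_vec y \<longrightarrow> x \<noteq> y \<longrightarrow> x - y \<in> S \<longrightarrow> g x \<noteq> g y)"

definition Omega :: "real ^ 'n ^ 'r \<Rightarrow> (real ^ 'n) set" where
  "Omega B = {x. nonneg_vec x \<and> (\<forall>i. (\<exists>j. B $ j $ i < 0) \<longrightarrow> x $ i \<noteq> 0)}"

end

theory Submission
  imports Defs
begin

text \<open>Shift every coordinate where \<open>x\<close> or \<open>y\<close> vanishes by the same small \<open>t > 0\<close>. Both points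
  become positive and their difference is unchanged. Monomials that differ at \<open>x, y\<close> keep the sign
  of their difference for small \<open>t\<close> by continuity (which is where \<open>x, y \<in> \<Omega>\<^sub>B\<close> enters), and
  monomials that agree keep agreeing: either the shift does not touch their support, or by the
  hypothesis on common zeros both points vanish on the whole support. Rescaling \<open>\<kappa>\<close> by the
  (positive) ratios of the differences then turns \<open>f\<^sub>\<kappa>(x) = f\<^sub>\<kappa>(y)\<close> into an equality between
  two distinct positive points, contradicting injectivity.\<close>

lemma monom_pow_eq_0_iff: "monom_pow x b = 0 \<longleftrightarrow> (\<exists>i. b $ i \<noteq> 0 \<and> x $ i = 0)"
  unfolding monom_pow_def rpow_def by (auto split: if_splits)

lemma monom_pow_cong: "(\<And>i. b $ i \<noteq> 0 \<Longrightarrow> x $ i = y $ i) \<Longrightarrow> monom_pow x b = monom_pow y b"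
  unfolding monom_pow_def rpow_def by (intro prod.cong) auto

lemma tendsto_monom_pow_shift:
  fixes x e b :: "real ^ 'n"
  assumes "nonneg_vec x" and "nonneg_vec e"
    and "\<And>i. x $ i = 0 \<Longrightarrow> b $ i \<ge> 0"
  shows "((\<lambda>t. monom_pow (x + t *\<^sub>R e) b) \<longlongrightarrow> monom_pow x b) (at_right 0)"
  unfolding monom_pow_def
proof (rule tendsto_prod)
  fix i
  show "((\<lambda>t. rpow ((x + t *\<^sub>R e) $ i) (b $ i)) \<longlongrightarrow> rpow (x $ i) (b $ i)) (at_right 0)"
  proof (cases "b $ i = 0")
    case True
    then show ?thesis by (simp add: rpow_def)
  next
    case False
    have "\<forall>\<^sub>F t in at_right 0. x $ i + t * e $ i \<ge> 0"
      using eventually_at_right_less[of "0::real"]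
      by (rule eventually_mono) (use assms(1,2) in \<open>auto simp: nonneg_vec_def\<close>)
    moreover have "((\<lambda>t. x $ i + t * e $ i) \<longlongrightarrow> x $ i + 0 * e $ i) (at_right 0)"
      by (intro tendsto_intros)
    ultimately have "((\<lambda>t. (x $ i + t * e $ i) powr b $ i) \<longlongrightarrow> x $ i powr b $ i) (at_right 0)"
      using assms(3)[of i] False by (intro tendsto_powr') auto
    then show ?thesis
      using False by (simp add: rpow_def)
  qed
qed

lemma eventually_sgn_eq:
  fixes f :: "'a \<Rightarrow> real"
  assumes "(f \<longlongrightarrow> l) F" and "l \<noteq> 0"
  shows "\<forall>\<^sub>F t in F. sgn (f t) = sgn l"
proof (cases "l > 0")
  case True
  show ?thesis
    using order_tendstoD(1)[OF assms(1) True] by (rule eventually_mono) (use True in auto)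
next
  case False
  then have "l < 0" using assms(2) by simp
  show ?thesis
    using order_tendstoD(2)[OF assms(1) \<open>l < 0\<close>] by (rule eventually_mono) (use \<open>l < 0\<close> in auto)
qed

lemma Omega_exponent_nonneg: "x \<in> Omega B \<Longrightarrow> x $ i = 0 \<Longrightarrow> B $ j $ i \<ge> 0"
  unfolding Omega_def by (auto simp: not_less[symmetric])

lemma pos_vec_shift:
  fixes x e :: "real ^ 'n"
  assumes "nonneg_vec x" and "nonneg_vec e" and "\<And>i. x $ i = 0 \<Longrightarrow> e $ i > 0" and "t > 0"
  shows "pos_vec (x + t *\<^sub>R e)"
  unfolding pos_vec_def
proof
  fix i
  have "x $ i \<ge> 0" "e $ i \<ge> 0"
    using assms(1,2) by (simp_all add: nonneg_vec_def)
  then show "(x + t *\<^sub>R e) $ i > 0"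
    using assms(3)[of i] \<open>t > 0\<close> by (cases "x $ i = 0") (auto intro: add_pos_nonneg)
qed

lemma monom_pow_shift_eq:
  fixes x y e b :: "real ^ 'n"
  assumes eq: "monom_pow x b = monom_pow y b"
    and zero: "monom_pow x b = 0 \<Longrightarrow> monom_pow y b = 0 \<Longrightarrow> (\<forall>i. b $ i \<noteq> 0 \<longrightarrow> x $ i = 0 \<and> y $ i = 0)"
    and supp: "\<And>i. e $ i \<noteq> 0 \<Longrightarrow> x $ i = 0 \<or> y $ i = 0"
  shows "monom_pow (x + t *\<^sub>R e) b = monom_pow (y + t *\<^sub>R e) b"
proof (cases "monom_pow x b = 0")
  case True
  with eq zero show ?thesis
    by (intro monom_pow_cong) auto
next
  case False
  with eq have "monom_pow y b \<noteq> 0"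
    by simp
  with False have "e $ i = 0" if "b $ i \<noteq> 0" for i
    using that supp[of i] by (auto simp: monom_pow_eq_0_iff)
  then have "monom_pow (x + t *\<^sub>R e) b = monom_pow x b" "monom_pow (y + t *\<^sub>R e) b = monom_pow y b"
    by (auto intro!: monom_pow_cong)
  with eq show ?thesis
    by simp
qed

lemma positive_perturbation_preserving_monom_signs:
  fixes B :: "real ^ 'n ^ 'r" and x y :: "real ^ 'n"
  assumes xO: "x \<in> Omega B" and yO: "y \<in> Omega B"
    and zero: "\<And>j. monom_pow x (B $ j) = 0 \<Longrightarrow> monom_pow y (B $ j) = 0 \<Longrightarrow>
                 (\<forall>i. B $ j $ i \<noteq> 0 \<longrightarrow> x $ i = 0 \<and> y $ i = 0)"
  obtains x' y' where "pos_vec x'" "pos_vec y'" "x' - y' = x - y"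
    "\<And>j. sgn (monom_pow x' (B $ j) - monom_pow y' (B $ j))
          = sgn (monom_pow x (B $ j) - monom_pow y (B $ j))"
proof -
  define e :: "real ^ 'n" where "e = (\<chi> i. if x $ i = 0 \<or> y $ i = 0 then 1 else 0)"
  define d where "d = (\<lambda>j. monom_pow x (B $ j) - monom_pow y (B $ j))"
  define d' where "d' = (\<lambda>t j. monom_pow (x + t *\<^sub>R e) (B $ j) - monom_pow (y + t *\<^sub>R e) (B $ j))"
  have nonneg: "nonneg_vec x" "nonneg_vec y" "nonneg_vec e"
    using xO yO by (auto simp: Omega_def nonneg_vec_def e_def)
  have unchanged: "d' t j = d j" if "d j = 0" for t j
  proof -
    have "monom_pow (x + t *\<^sub>R e) (B $ j) = monom_pow (y + t *\<^sub>R e) (B $ j)"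
      using that zero[of j] by (intro monom_pow_shift_eq) (auto simp: d_def e_def split: if_splits)
    with that show ?thesis
      by (simp add: d_def d'_def)
  qed
  have "\<forall>\<^sub>F t in at_right 0. \<forall>j. sgn (d' t j) = sgn (d j)"
  proof (rule eventually_all_finite)
    fix j
    show "\<forall>\<^sub>F t in at_right 0. sgn (d' t j) = sgn (d j)"
    proof (cases "d j = 0")
      case True
      then show ?thesis using unchanged by simp
    next
      case False
      have "((\<lambda>t. d' t j) \<longlongrightarrow> d j) (at_right 0)"
        unfolding d'_def d_def using nonneg Omega_exponent_nonneg[OF xO] Omega_exponent_nonneg[OF yO]
        by (intro tendsto_diff tendsto_monom_pow_shift)
      then show ?thesis
        using False by (rule eventually_sgn_eq)
    qed
  qed
  moreover have "\<forall>\<^sub>F t in at_right 0. t > (0::real)"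
    by (rule eventually_at_right_less)
  ultimately have "\<forall>\<^sub>F t in at_right 0. t > 0 \<and> (\<forall>j. sgn (d' t j) = sgn (d j))"
    by (simp add: eventually_conj_iff)
  then obtain t where "t > 0" and signs: "\<And>j. sgn (d' t j) = sgn (d j)"
    using eventually_happens'[OF trivial_limit_at_right_real] by blast
  show ?thesis
  proof (rule that)
    have "e $ i > 0" if "x $ i = 0 \<or> y $ i = 0" for i
      using that by (simp add: e_def)
    then show "pos_vec (x + t *\<^sub>R e)" "pos_vec (y + t *\<^sub>R e)"
      using nonneg \<open>t > 0\<close> by (simp_all add: pos_vec_shift)
    show "x + t *\<^sub>R e - (y + t *\<^sub>R e) = x - y"
      by simp
    show "\<And>j. sgn (monom_pow (x + t *\<^sub>R e) (B $ j) - monom_pow (y + t *\<^sub>R e) (B $ j))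
              = sgn (monom_pow x (B $ j) - monom_pow y (B $ j))"
      using signs unfolding d_def d'_def .
  qed
qed

lemma exists_pos_rescaling:
  fixes \<kappa> :: "real ^ 'r" and d d' :: "'r \<Rightarrow> real"
  assumes "pos_vec \<kappa>" and signs: "\<And>j. sgn (d' j) = sgn (d j)"
  obtains \<kappa>' where "pos_vec \<kappa>'" "\<And>j. \<kappa>' $ j * d' j = \<kappa> $ j * d j"
proof
  define \<kappa>' :: "real ^ 'r" where "\<kappa>' = (\<chi> j. if d' j = 0 then \<kappa> $ j else \<kappa> $ j * (d j / d' j))"
  have "d' j = 0 \<longleftrightarrow> d j = 0" "0 < d j / d' j \<or> d' j = 0" for j
    using signs[of j]
    by (metis sgn_0_0 sgn_eq_0_iff,
        metis sgn_greater sgn_less zero_less_divide_iff linorder_neqE_linordered_idom)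
  then show "pos_vec \<kappa>'" "\<And>j. \<kappa>' $ j * d' j = \<kappa> $ j * d j"
    using assms(1) by (auto simp: pos_vec_def \<kappa>'_def simp del: times_divide_eq_right intro!: mult_pos_pos)
qed

lemma gmak_diff:
  "gmak A B \<kappa> x - gmak A B \<kappa> y
     = A *v (\<chi> j. \<kappa> $ j * (monom_pow x (B $ j) - monom_pow y (B $ j)))"
proof -
  have "(\<chi> j. \<kappa> $ j * vec_pow x B $ j) - (\<chi> j. \<kappa> $ j * vec_pow y B $ j)
      = (\<chi> j. \<kappa> $ j * (monom_pow x (B $ j) - monom_pow y (B $ j)))"
    by (simp add: vec_eq_iff vec_pow_def right_diff_distrib)
  then show ?thesis
    by (simp add: gmak_def matrix_vector_mult_diff_distrib[symmetric])
qed

theorem mainTheorem10: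
  fixes A :: "real ^ 'r ^ 'm" and B :: "real ^ 'n ^ 'r" and S :: "(real ^ 'n) set"
    and x y :: "real ^ 'n"
  assumes inj: "\<And>\<kappa>. pos_vec \<kappa> \<Longrightarrow> injective_wrt (gmak A B \<kappa>) S"
    and xO: "x \<in> Omega B" and yO: "y \<in> Omega B"
    and xy: "x \<noteq> y" and xyS: "x - y \<in> S"
    and zero: "\<And>j. monom_pow x (B $ j) = 0 \<Longrightarrow> monom_pow y (B $ j) = 0 \<Longrightarrow>
                 (\<forall>i. B $ j $ i \<noteq> 0 \<longrightarrow> x $ i = 0 \<and> y $ i = 0)"
  shows "\<forall>\<kappa>. pos_vec \<kappa> \<longrightarrow> gmak A B \<kappa> x \<noteq> gmak A B \<kappa> y"
proof (intro allI impI notI)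
  fix \<kappa> :: "real ^ 'r"
  assume "pos_vec \<kappa>" and eq: "gmak A B \<kappa> x = gmak A B \<kappa> y"
  obtain x' y' where pos: "pos_vec x'" "pos_vec y'" and diff: "x' - y' = x - y"
    and signs: "\<And>j. sgn (monom_pow x' (B $ j) - monom_pow y' (B $ j))
                     = sgn (monom_pow x (B $ j) - monom_pow y (B $ j))"
    using positive_perturbation_preserving_monom_signs[OF xO yO zero] by metis
  obtain \<kappa>' where "pos_vec \<kappa>'" and rescaled:
    "\<And>j. \<kappa>' $ j * (monom_pow x' (B $ j) - monom_pow y' (B $ j))
        = \<kappa> $ j * (monom_pow x (B $ j) - monom_pow y (B $ j))"
    using exists_pos_rescaling[where d = "\<lambda>j. monom_pow x (B $ j) - monom_pow y (B $ j)"
        and d' = "\<lambda>j. monom_pow x' (B $ j) - monom_pow y' (B $ j)"] \<open>pos_vec \<kappa>\<close> signs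
    by metis
  have "gmak A B \<kappa>' x' - gmak A B \<kappa>' y' = gmak A B \<kappa> x - gmak A B \<kappa> y"
    by (simp only: gmak_diff rescaled)
  with eq have "gmak A B \<kappa>' x' = gmak A B \<kappa>' y'"
    by simp
  moreover have "x' \<noteq> y'" "x' - y' \<in> S"
    using diff xy xyS by auto
  ultimately show False
    using inj[OF \<open>pos_vec \<kappa>'\<close>] pos unfolding injective_wrt_def by blast
qed

end
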